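(* Let $s$ be a non-null loop sequence in $\mathbb{Z}^d$ and let $s'$ be obtained from $s$ by a splitting operation. Then $\iota(s')<\iota(s)$.
   Context: $E$ is the set of directed nearest-neighbour edges of $\mathbb{Z}^d$; $e^{-1}$ is the reversed edge. Paths, closed paths and cycles (classes of closed paths under cyclic rotation) as usual; each cycle has a first edge fixed by an arbitrary rule and "location $k$" is its $k$-th edge. A closed path $e_1\cdots e_n$ has a backtrack at $i\le n-1$ if $e_{i+1}=e_i^{-1}$ and at $n$ if $e_1=e_n^{-1}$; successively erasing backtracks (removing both edges) until none remain gives a well-defined cycle $[\cdot]$. A loop is a cycle without backtracks (including the null loop). A loop sequence is a finite sequence of loops modulo inserting/deleting null loops; a non-null one has a minimal representation $(l_1,\dots,l_n)$ without null loops; its length is $|s|=\sum|l_i|$, its size is $\#s=n$, and its index is $\iota(s)=|s|-\#s$ (all zero for the null loop sequence). Splitting a loop $l$ at distinct locations $x,y$: if $l$ has edge $e$ at both, write $l=aebec$ (displayed $e$'s at $x,y$ respectively) and obtain the pair $([aec],[be])$; if $l$ has $e$ at $x$ and $e^{-1}$ at $y$, write $l=aebe^{-1}c$ and obtain $([ac],[b])$. A splitting of $s$ replaces one component $l_k$ of its minimal representation by the two loops of a splitting of $l_k$. *)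

theory Defs
  imports Main
begin

text \<open>Vertices of Z^d: functions from a finite index type 'd to int.
  Directed edges: pairs (x,y) of nearest neighbours.\<close>

type_synonym 'd vtx = "'d \<Rightarrow> int"
type_synonym 'd edge = "'d vtx \<times> 'd vtx"

definition is_edge :: "'d::finite edge \<Rightarrow> bool" where
  "is_edge e \<longleftrightarrow> (\<exists>i. snd e = (fst e)(i := fst e i + 1) \<or> snd e = (fst e)(i := fst e i - 1))"

definition inv_edge :: "'d edge \<Rightarrow> 'd edge" where
  "inv_edge e = (snd e, fst e)"

definition is_path :: "'d::finite edge list \<Rightarrow> bool" where
  "is_path p \<longleftrightarrow> (\<forall>e\<in>set p. is_edge e) \<and>
     (\<forall>i. Suc i < length p \<longrightarrow> snd (p ! i) = fst (p ! Suc i))"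

definition closed_path :: "'d::finite edge list \<Rightarrow> bool" where
  "closed_path p \<longleftrightarrow> p \<noteq> [] \<and> is_path p \<and> snd (last p) = fst (hd p)"

text \<open>Backtrack at i \<le> n-1, or at n (wrap-around).\<close>
definition has_backtrack :: "'d edge list \<Rightarrow> bool" where
  "has_backtrack p \<longleftrightarrow>
     (\<exists>i. Suc i < length p \<and> p ! Suc i = inv_edge (p ! i)) \<or>
     (p \<noteq> [] \<and> hd p = inv_edge (last p))"

definition erase_step :: "'d edge list \<Rightarrow> 'd edge list \<Rightarrow> bool" where
  "erase_step p q \<longleftrightarrow>
     (\<exists>a e b. p = a @ e # inv_edge e # b \<and> q = a @ b) \<or>
     (\<exists>e m. p = e # m @ [inv_edge e] \<and> q = m)"

text \<open>q is (a representative of) the cycle [p] obtained by successively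
  erasing backtracks until none remain.\<close>
definition reduces_to :: "'d edge list \<Rightarrow> 'd edge list \<Rightarrow> bool" where
  "reduces_to p q \<longleftrightarrow> erase_step\<^sup>*\<^sup>* p q \<and> \<not> has_backtrack q"

text \<open>Loops (represented by a representative closed path; [] is the null loop).\<close>
definition is_loop :: "'d::finite edge list \<Rightarrow> bool" where
  "is_loop l \<longleftrightarrow> l = [] \<or> (closed_path l \<and> \<not> has_backtrack l)"

text \<open>Loop sequences: lists of loops, modulo null loops.\<close>
definition minrep :: "'d edge list list \<Rightarrow> 'd edge list list" where
  "minrep s = filter (\<lambda>l. l \<noteq> []) s"

definition ls_length :: "'d edge list list \<Rightarrow> nat" where
  "ls_length s = sum_list (map length (minrep s))"

definition ls_size :: "'d edge list list \<Rightarrow> nat" where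
  "ls_size s = length (minrep s)"

definition ls_index :: "'d edge list list \<Rightarrow> int" where
  "ls_index s = int (ls_length s) - int (ls_size s)"

text \<open>A loop is a cycle, so
  "l = a e b e c" means some cyclic rotation of the representative equals a e b e c;
  the two displayed edges sit at two distinct locations.\<close>
definition loop_split :: "'d edge list \<Rightarrow> 'd edge list \<Rightarrow> 'd edge list \<Rightarrow> bool" where
  "loop_split l l1 l2 \<longleftrightarrow>
     (\<exists>k a b c e. rotate k l = a @ e # b @ e # c \<and>
         reduces_to (a @ e # c) l1 \<and> reduces_to (b @ [e]) l2) \<or>
     (\<exists>k a b c e. rotate k l = a @ e # b @ inv_edge e # c \<and>
         reduces_to (a @ c) l1 \<and> reduces_to b l2)"

definition ls_split :: "'d edge list list \<Rightarrow> 'd edge list list \<Rightarrow> bool" where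
  "ls_split s s' \<longleftrightarrow>
     (\<exists>k l1 l2. k < length (minrep s) \<and> loop_split (minrep s ! k) l1 l2 \<and>
        s' = take k (minrep s) @ [l1, l2] @ drop (Suc k) (minrep s))"

end

theory Submission
  imports Defs
begin

text \<open>Backtrack erasure only shortens paths, so a splitting of a loop of length \<open>n\<close> produces
  two loops of total length at most \<open>n\<close>, each shorter than \<open>n\<close>; hence the index
  \<open>n - 1\<close> of the split component exceeds the index of the (at most two) non-null pieces.
  Only lengths matter here.\<close>

lemma erase_step_length: "erase_step p q \<Longrightarrow> length p = length q + 2"
  by (auto simp: erase_step_def)

lemma reduces_to_length_le:
  assumes "reduces_to p q"
  shows "length q \<le> length p"
proof -
  from assms have "erase_step\<^sup>*\<^sup>* p q" by (simp add: reduces_to_def)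
  then show ?thesis
    by (induction rule: rtranclp_induct) (auto dest: erase_step_length)
qed

lemma loop_split_length_bounds:
  assumes "loop_split l l1 l2"
  obtains n1 n2 where "length l = n1 + n2 + 2" "length l1 \<le> n1 + 1" "length l2 \<le> n2 + 1"
  using assms unfolding loop_split_def
proof (elim disjE exE conjE)
  fix k a b c e
  assume rot: "rotate k l = a @ e # b @ e # c"
    and "reduces_to (a @ e # c) l1" "reduces_to (b @ [e]) l2"
  moreover have "length l = length a + length c + length b + 2"
    using arg_cong[OF rot, of length] by simp
  ultimately show thesis
    using that[of "length a + length c" "length b"] by (auto dest!: reduces_to_length_le)
next
  fix k a b c e
  assume rot: "rotate k l = a @ e # b @ inv_edge e # c"
    and "reduces_to (a @ c) l1" "reduces_to b l2"
  moreover have "length l = length a + length c + length b + 2"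
    using arg_cong[OF rot, of length] by simp
  ultimately show thesis
    using that[of "length a + length c" "length b"] by (auto dest!: reduces_to_length_le)
qed

lemma ls_index_append: "ls_index (xs @ ys) = ls_index xs + ls_index ys"
  by (simp add: ls_index_def ls_length_def ls_size_def minrep_def)

lemma ls_index_minrep: "ls_index (minrep s) = ls_index s"
  by (simp add: ls_index_def ls_length_def ls_size_def minrep_def)

lemma ls_index_single: "l \<noteq> [] \<Longrightarrow> ls_index [l] = int (length l) - 1"
  by (simp add: ls_index_def ls_length_def ls_size_def minrep_def)

lemma ls_index_loop_split_lt:
  assumes "loop_split l l1 l2"
  shows "ls_index [l1, l2] < int (length l) - 1"
proof -
  obtain n1 n2 where "length l = n1 + n2 + 2" "length l1 \<le> n1 + 1" "length l2 \<le> n2 + 1"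
    using loop_split_length_bounds[OF assms] .
  then show ?thesis
    by (cases "l1 = []"; cases "l2 = []")
      (auto simp: ls_index_def ls_length_def ls_size_def minrep_def)
qed

theorem lemma9p8:
  fixes s s' :: "('d::finite) edge list list"
  assumes "\<forall>l\<in>set s. is_loop l"
    and "minrep s \<noteq> []"
    and "ls_split s s'"
  shows "ls_index s' < ls_index s"
proof -
  define M where "M = minrep s"
  obtain k l1 l2 where k: "k < length M" and split: "loop_split (M ! k) l1 l2"
    and s': "s' = take k M @ [l1, l2] @ drop (Suc k) M"
    using assms(3) unfolding ls_split_def M_def by blast
  have "M ! k \<noteq> []"
    using k nth_mem[OF k] by (auto simp: M_def minrep_def)
  have "ls_index s = ls_index (take k M @ [M ! k] @ drop (Suc k) M)"
    using k by (simp add: M_def ls_index_minrep id_take_nth_drop[symmetric])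
  also have "\<dots> = ls_index (take k M) + (int (length (M ! k)) - 1) + ls_index (drop (Suc k) M)"
    unfolding ls_index_append ls_index_single[OF \<open>M ! k \<noteq> []\<close>] by linarith
  finally show ?thesis
    using ls_index_loop_split_lt[OF split] unfolding s' ls_index_append by linarith
qed

end
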